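(* Let $\mu$ be a positive measure on $\mathbb{R}^n$ absolutely continuous with respect to Lebesgue measure, let $Q_0$ be a cube with $0<\mu(Q_0)<\infty$, let $0<\varepsilon<2$, and let $f\in GR_\mu(\varepsilon)$ on $Q_0$. Then for every $\lambda$ with $\varepsilon<\lambda<2$, every $\rho$ with $0<\rho<1-\lambda/2$, and every $0<t\le\rho\mu(Q_0)$, $$f_\mu^{**}(t)\le\Big(B(n)\frac{\lambda/\rho+1}{\lambda-\varepsilon}\,\varepsilon+1\Big)f_\mu^*(t).$$
   Context: For a cube $Q$ with $0<\mu(Q)<\infty$ and $f$ $\mu$-integrable on $Q$, define $f_{Q,\mu}=\frac{1}{\mu(Q)}\int_Q f\,d\mu$ and $\Omega_\mu(f;Q)=\frac{1}{\mu(Q)}\int_Q |f(x)-f_{Q,\mu}|\,d\mu(x)$. A nonnegative function $f$, $\mu$-integrable on $Q_0$, belongs to $GR_\mu(\varepsilon)$ (on $Q_0$) if $\Omega_\mu(f;Q)\le\varepsilon f_{Q,\mu}$ for every cube $Q\subset Q_0$ (for which the averages are defined). The non-increasing rearrangement of $f$ on $Q_0$ with respect to $\mu$ is $f_\mu^*(t)=\sup_{E\subset Q_0,\ \mu(E)=t}\inf_{x\in E}|f(x)|$ for $0<t<\mu(Q_0)$, and $f_\mu^{**}(t)=t^{-1}\int_0^t f_\mu^*(\tau)\,d\tau$. $B(n)$ is the dimensional constant of the following covering lemma (Mateu–Mattila–Nicolau–Orobitg), valid for every such $\mu$: if $E\subset Q_0$ and $\mu(E)\le\rho\mu(Q_0)$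 with $0<\rho<1$, then there is a sequence of cubes $Q_i\subset Q_0$ with $\mu(Q_i\cap E)=\rho\mu(Q_i)$ for each $i$, such that every point of $Q_0$ belongs to at most $B(n)$ of the cubes $Q_i$, and the set of $\mu$-density points of $E$ is contained in $\bigcup_i Q_i$. *)

theory Defs
  imports "HOL-Analysis.Analysis"
begin

definition is_cube :: "(real ^ 'n) set \<Rightarrow> bool" where
  "is_cube Q \<longleftrightarrow> (\<exists>a l. 0 < l \<and> Q = cbox a (a + l *\<^sub>R One))"

definition centered_cube :: "real ^ 'n \<Rightarrow> real \<Rightarrow> (real ^ 'n) set" where
  "centered_cube x r = cbox (x - r *\<^sub>R One) (x + r *\<^sub>R One)"

definition admissible_measure :: "(real ^ 'n) measure \<Rightarrow> bool" where
  "admissible_measure M \<longleftrightarrow> sets M = sets lborel \<and> absolutely_continuous lborel M"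

definition avg :: "(real ^ 'n) measure \<Rightarrow> (real ^ 'n) set \<Rightarrow> (real ^ 'n \<Rightarrow> real) \<Rightarrow> real" where
  "avg M Q f = (1 / measure M Q) * (LINT x:Q|M. f x)"

definition osc :: "(real ^ 'n) measure \<Rightarrow> (real ^ 'n) set \<Rightarrow> (real ^ 'n \<Rightarrow> real) \<Rightarrow> real" where
  "osc M Q f = (1 / measure M Q) * (LINT x:Q|M. \<bar>f x - avg M Q f\<bar>)"

definition GR :: "(real ^ 'n) measure \<Rightarrow> (real ^ 'n) set \<Rightarrow> real \<Rightarrow> (real ^ 'n \<Rightarrow> real) \<Rightarrow> bool" where
  "GR M Q0 eps f \<longleftrightarrow>
     (\<forall>x\<in>Q0. 0 \<le> f x) \<and> set_integrable M Q0 f \<and>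
     (\<forall>Q. is_cube Q \<and> Q \<subseteq> Q0 \<and> 0 < measure M Q \<longrightarrow> osc M Q f \<le> eps * avg M Q f)"

definition rearr :: "(real ^ 'n) measure \<Rightarrow> (real ^ 'n) set \<Rightarrow> (real ^ 'n \<Rightarrow> real) \<Rightarrow> real \<Rightarrow> real" where
  "rearr M Q0 f t = Sup {Inf ((\<lambda>x. \<bar>f x\<bar>) ` E) | E. E \<in> sets M \<and> E \<subseteq> Q0 \<and> measure M E = t}"

definition rearr2 :: "(real ^ 'n) measure \<Rightarrow> (real ^ 'n) set \<Rightarrow> (real ^ 'n \<Rightarrow> real) \<Rightarrow> real \<Rightarrow> real" where
  "rearr2 M Q0 f t = (1 / t) * (LBINT \<tau>=0..t. rearr M Q0 f \<tau>)"

definition density_point :: "(real ^ 'n) measure \<Rightarrow> (real ^ 'n) set \<Rightarrow> real ^ 'n \<Rightarrow> bool" where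
  "density_point M E x \<longleftrightarrow>
     ((\<lambda>r. measure M (E \<inter> centered_cube x r) / measure M (centered_cube x r)) \<longlongrightarrow> 1) (at_right 0)"

text \<open>B is a valid constant for the Mateu-Mattila-Nicolau-Orobitg covering lemma in
  dimension n (the dimension is the type 'n).\<close>
definition covering_constant :: "nat \<Rightarrow> ('n::finite) itself \<Rightarrow> bool" where
  "covering_constant B (_ :: ('n::finite) itself) \<longleftrightarrow>
     (\<forall>(M :: (real ^ 'n) measure) Q0 E rho.
        admissible_measure M \<and> is_cube Q0 \<and> 0 < emeasure M Q0 \<and> emeasure M Q0 < \<infinity> \<and>
        E \<in> sets M \<and> E \<subseteq> Q0 \<and> 0 < rho \<and> rho < 1 \<and> measure M E \<le> rho * measure M Q0 \<longrightarrow>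
        (\<exists>(I :: nat set) (Qs :: nat \<Rightarrow> (real ^ 'n) set).
           (\<forall>i\<in>I. is_cube (Qs i) \<and> Qs i \<subseteq> Q0 \<and> measure M (Qs i \<inter> E) = rho * measure M (Qs i)) \<and>
           (\<forall>x\<in>Q0. finite {i\<in>I. x \<in> Qs i} \<and> card {i\<in>I. x \<in> Qs i} \<le> B) \<and>
           {x. density_point M E x} \<subseteq> (\<Union>i\<in>I. Qs i)))"

end

theory Submission
  imports Defs "HOL-Probability.Distribution_Functions"
begin

(* Write s = f^*(t) and E = {x in Q0. s < f x}, so that mu(E) <= t. Comparing the level sets
   of f^* on (0, mu(E)] with those of f on E (layer cake) gives
     t f^**(t) <= t s + int_E (f - s) dmu.
   To bound the excess int_E (f - s), enlarge E to a set W in Q0 of only slightly larger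
   measure in which almost every point of E is a density point, and apply the covering lemma
   to W with a ratio r strictly between rho and 1 - lam/2. On each cube Q of the cover,
   mu(Q n W) = r mu(Q) and f <= s off W; the GR condition bounds the integrals of f - f_Q over
   Q n W and over Q - W by eps f_Q mu(Q)/2 in absolute value, which yields
     int_(Q n W) (f - s) <= eps (lam/(2r) + 1)/(lam - eps) s mu(Q n W).
   Summing over the cubes, which overlap at most B times, and letting mu(W) decrease to
   mu(E) gives int_E (f - s) <= B eps (lam/rho + 1)/(lam - eps) s mu(E) with mu(E) <= t. *)

lemma nn_integral_layer_cake:
  fixes h :: "'a \<Rightarrow> real"
  assumes "sigma_finite_measure N" and [measurable]: "h \<in> borel_measurable N"
    and nonneg: "\<And>x. x \<in> space N \<Longrightarrow> 0 \<le> h x"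
  shows "(\<integral>\<^sup>+x. ennreal (h x) \<partial>N) =
     (\<integral>\<^sup>+c. indicator {0<..} c * emeasure N {x\<in>space N. c < h x} \<partial>lborel)"
proof -
  interpret pair_sigma_finite N lborel
    using assms(1) by (simp add: pair_sigma_finite_def lborel.sigma_finite_measure_axioms)
  have "(\<integral>\<^sup>+x. ennreal (h x) \<partial>N) = (\<integral>\<^sup>+x. (\<integral>\<^sup>+c. indicator {0<..<h x} c \<partial>lborel) \<partial>N)"
    using nonneg by (intro nn_integral_cong) (auto simp: nn_integral_indicator)
  also have "\<dots> = (\<integral>\<^sup>+x. (\<integral>\<^sup>+c. indicator {(x,c). 0 < c \<and> c < h x} (x,c) \<partial>lborel) \<partial>N)"
    by (intro nn_integral_cong) (auto simp: indicator_def)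
  also have "\<dots> = (\<integral>\<^sup>+c. (\<integral>\<^sup>+x. indicator {(x,c). 0 < c \<and> c < h x} (x,c) \<partial>N) \<partial>lborel)"
    by (rule Fubini'[symmetric]) measurable
  also have "\<dots> = (\<integral>\<^sup>+c. indicator {0<..} c * emeasure N {x\<in>space N. c < h x} \<partial>lborel)"
  proof (rule nn_integral_cong)
    fix c :: real
    have "(\<integral>\<^sup>+x. indicator {(x,c). 0 < c \<and> c < h x} (x,c) \<partial>N) =
          (\<integral>\<^sup>+x. indicator {0<..} c * indicator {x\<in>space N. c < h x} x \<partial>N)"
      by (intro nn_integral_cong) (auto simp: indicator_def)
    then show "(\<integral>\<^sup>+x. indicator {(x,c). 0 < c \<and> c < h x} (x,c) \<partial>N) =
        indicator {0<..} c * emeasure N {x\<in>space N. c < h x}"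
      by (simp add: nn_integral_cmult)
  qed
  finally show ?thesis .
qed

lemma hyperplane_in_null_sets:
  fixes M :: "'a::euclidean_space measure"
  assumes "sets M = sets lborel" "absolutely_continuous lborel M" "b \<noteq> 0"
  shows "{x. x \<bullet> b = c} \<in> null_sets M"
proof -
  have "negligible {x::'a. b \<bullet> x = c}"
    using assms(3) by (intro negligible_hyperplane) auto
  moreover have "closed {x::'a. b \<bullet> x = c}"
    by (intro closed_Collect_eq continuous_intros)
  ultimately have "{x::'a. b \<bullet> x = c} \<in> null_sets lborel"
    by (auto simp: null_sets_completion_iff negligible_iff_null_sets borel_closed)
  then show ?thesis
    using assms(2) by (auto simp: absolutely_continuous_def inner_commute)
qed

(* The distribution function of a coordinate restricted to F has no atoms, hence it is
   continuous and takes every value between 0 and the measure of F. *)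
lemma exists_subset_measure_eq:
  fixes M :: "'a::euclidean_space measure"
  assumes M: "sets M = sets lborel" "absolutely_continuous lborel M"
    and F: "F \<in> sets M" "emeasure M F < \<infinity>" and \<tau>: "0 \<le> \<tau>" "\<tau> \<le> measure M F"
  obtains G where "G \<in> sets M" "G \<subseteq> F" "measure M G = \<tau>"
proof -
  obtain b :: 'a where b: "b \<in> Basis" using nonempty_Basis by blast
  have space_M: "space M = UNIV" using sets_eq_imp_space_eq[OF M(1)] by simp
  have [measurable]: "(\<lambda>x. x \<bullet> b) \<in> borel_measurable (restrict_space M F)"
    by (intro measurable_restrict_space1) (simp add: measurable_cong_sets[OF M(1) refl])
  define D where "D = distr (restrict_space M F) borel (\<lambda>x. x \<bullet> b)"
  have sets_slice: "{x\<in>F. x \<bullet> b \<le> a} \<in> sets M" for a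
    using F(1) M(1) by (simp add: borel_closed closed_Collect_le continuous_intros)
  have cdf_D: "cdf D a = measure M {x\<in>F. x \<bullet> b \<le> a}" for a
    using F(1) sets_slice unfolding cdf_def D_def
    by (subst measure_distr) (auto simp: space_restrict_space space_M measure_restrict_space
        intro!: arg_cong[where f="measure _"])
  have "finite_measure D"
    using F by (intro finite_measureI)
      (simp add: D_def emeasure_distr emeasure_restrict_space space_restrict_space space_M)
  then interpret D: finite_borel_measure D
    by (simp add: finite_borel_measure_def finite_borel_measure_axioms_def D_def)
  have "measure D {a} = measure M (F \<inter> {x. x \<bullet> b = a})" for a
    using F(1) M(1)
    by (simp add: D_def measure_distr space_restrict_space space_M measure_restrict_space
        vimage_def Int_def conj_commute)
  moreover have "F \<inter> {x. x \<bullet> b = a} \<in> null_sets M" for a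
    using null_set_Int1[OF hyperplane_in_null_sets[OF M nonzero_Basis[OF b]] F(1)] .
  ultimately have "isCont (cdf D) a" for a
    by (simp add: D.isCont_cdf measure_def null_setsD1)
  then have cont: "continuous_on S (cdf D)" for S
    by (simp add: continuous_at_imp_continuous_on)
  have total_D: "measure D (space D) = measure M F"
    using F(1)
    by (simp add: D_def measure_distr space_restrict_space space_M measure_restrict_space)
  show thesis
  proof (cases "\<tau> = 0 \<or> \<tau> = measure M F")
    case True
    then show thesis using that[of "{}"] that[of F] F(1) by auto
  next
    case False
    with \<tau> total_D have "0 < \<tau>" "\<tau> < measure D (space D)" by auto
    then obtain lo hi where "cdf D lo < \<tau>" "\<tau> < cdf D hi"
      using order_tendstoD(2)[OF D.cdf_lim_at_bot] order_tendstoD(1)[OF D.cdf_lim_at_top]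
      by (metis eventually_at_bot_linorder eventually_at_top_linorder order.refl)
    then have "lo \<le> hi" using D.cdf_nondecreasing[of hi lo] by linarith
    then obtain a where "cdf D a = \<tau>"
      using IVT'[of "cdf D" lo \<tau> hi] \<open>cdf D lo < \<tau>\<close> \<open>\<tau> < cdf D hi\<close> cont by auto
    then show thesis using that[of "{x\<in>F. x \<bullet> b \<le> a}"] sets_slice cdf_D by auto
  qed
qed

lemma nn_integral_sum_bounded_overlap_le:
  fixes \<psi> :: "'a \<Rightarrow> ennreal" and Q :: "nat \<Rightarrow> 'a set"
  assumes [measurable]: "\<And>i. Q i \<in> sets M" "\<psi> \<in> borel_measurable M"
    and overlap: "\<And>x. finite {i. x \<in> Q i} \<and> card {i. x \<in> Q i} \<le> B"
  shows "(\<Sum>i. \<integral>\<^sup>+x. \<psi> x * indicator (Q i) x \<partial>M) \<le> of_nat B * (\<integral>\<^sup>+x. \<psi> x \<partial>M)"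
proof -
  have pointwise: "(\<Sum>i. \<psi> x * indicator (Q i) x) \<le> of_nat B * \<psi> x" for x
  proof -
    have "(\<Sum>i. \<psi> x * indicator (Q i) x) = (\<Sum>i\<in>{i. x \<in> Q i}. \<psi> x * indicator (Q i) x)"
      using overlap[of x] by (intro suminf_finite) auto
    also have "\<dots> = of_nat (card {i. x \<in> Q i}) * \<psi> x"
      by simp
    also have "\<dots> \<le> of_nat B * \<psi> x"
      using overlap[of x] by (intro mult_right_mono) auto
    finally show ?thesis .
  qed
  have "(\<Sum>i. \<integral>\<^sup>+x. \<psi> x * indicator (Q i) x \<partial>M) = (\<integral>\<^sup>+x. (\<Sum>i. \<psi> x * indicator (Q i) x) \<partial>M)"
    by (rule nn_integral_suminf[symmetric]) measurable
  also have "\<dots> \<le> (\<integral>\<^sup>+x. of_nat B * \<psi> x \<partial>M)"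
    by (intro nn_integral_mono pointwise)
  also have "\<dots> = of_nat B * (\<integral>\<^sup>+x. \<psi> x \<partial>M)"
    by (rule nn_integral_cmult) measurable
  finally show ?thesis .
qed

lemma nn_integral_le_sum_cover:
  fixes \<psi> :: "'a \<Rightarrow> ennreal" and Q :: "nat \<Rightarrow> 'a set"
  assumes [measurable]: "\<And>i. Q i \<in> sets M" "\<psi> \<in> borel_measurable M"
    and cover: "AE x in M. \<psi> x \<noteq> 0 \<longrightarrow> x \<in> (\<Union>i. Q i)"
  shows "(\<integral>\<^sup>+x. \<psi> x \<partial>M) \<le> (\<Sum>i. \<integral>\<^sup>+x. \<psi> x * indicator (Q i) x \<partial>M)"
proof -
  have "AE x in M. \<psi> x \<le> (\<Sum>i. \<psi> x * indicator (Q i) x)"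
    using cover
  proof eventually_elim
    case (elim x)
    show ?case
    proof (cases "\<psi> x = 0")
      case False
      with elim obtain i where "x \<in> Q i" by auto
      then have "\<psi> x = (\<Sum>j\<in>{i}. \<psi> x * indicator (Q j) x)" by simp
      also have "\<dots> \<le> (\<Sum>j. \<psi> x * indicator (Q j) x)"
        by (intro sum_le_suminf) auto
      finally show ?thesis .
    qed simp
  qed
  then have "(\<integral>\<^sup>+x. \<psi> x \<partial>M) \<le> (\<integral>\<^sup>+x. (\<Sum>i. \<psi> x * indicator (Q i) x) \<partial>M)"
    by (rule nn_integral_mono_AE)
  also have "\<dots> = (\<Sum>i. \<integral>\<^sup>+x. \<psi> x * indicator (Q i) x \<partial>M)"
    by (rule nn_integral_suminf) measurable
  finally show ?thesis .
qed

lemma exists_open_superset_measure_less: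
  fixes M :: "'a::{second_countable_topology, complete_space} measure"
  assumes M: "sets M = sets borel" and A: "A \<in> sets M" "emeasure M A < \<infinity>"
    and E: "E \<in> sets M" and "0 < \<delta>"
  obtains U where "open U" "E \<subseteq> U" "measure M (U \<inter> A) < measure M (E \<inter> A) + \<delta>"
proof -
  define D where "D = density M (indicator A :: _ \<Rightarrow> ennreal)"
  have space_M: "space M = UNIV" using sets_eq_imp_space_eq[OF M] by simp
  have emeasure_D: "emeasure D S = emeasure M (S \<inter> A)" if "S \<in> sets M" for S
  proof -
    have "emeasure D S = (\<integral>\<^sup>+x. indicator A x * indicator S x \<partial>M)"
      unfolding D_def using A that by (intro emeasure_density) auto
    also have "\<dots> = (\<integral>\<^sup>+x. indicator (S \<inter> A) x \<partial>M)"
      by (intro nn_integral_cong) (auto simp: indicator_def)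
    finally show ?thesis using A that by simp
  qed
  have finite_Int: "emeasure M (S \<inter> A) < \<infinity>" for S
    using A emeasure_mono[of "S \<inter> A" A M] by (auto simp: top_unique)
  have "emeasure D (space D) \<noteq> \<infinity>"
    using emeasure_D[of UNIV] finite_Int[of UNIV] sets.top[of M] by (simp add: D_def space_M)
  then have "(INF U\<in>{U. E \<subseteq> U \<and> open U}. emeasure D U) = emeasure D E"
    using outer_regular[of D E] E M by (simp add: D_def)
  also have "\<dots> = ennreal (measure M (E \<inter> A))"
    using emeasure_D[OF E] finite_Int[of E] by (simp add: emeasure_eq_ennreal_measure)
  also have "\<dots> < ennreal (measure M (E \<inter> A) + \<delta>)"
    using \<open>0 < \<delta>\<close> by (simp add: ennreal_lessI)
  finally obtain U where U: "E \<subseteq> U" "open U" "emeasure D U < ennreal (measure M (E \<inter> A) + \<delta>)"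
    by (auto simp: INF_less_iff)
  have "ennreal (measure M (U \<inter> A)) = emeasure D U"
    using emeasure_D[of U] finite_Int[of U] U(2) M by (simp add: emeasure_eq_ennreal_measure)
  with U(3) have "measure M (U \<inter> A) < measure M (E \<inter> A) + \<delta>"
    by (metis ennreal_less_iff measure_nonneg)
  with U that show thesis by blast
qed

(* a is the mean of f on a cube of measure m, D the deviation of the integral of f over the
   portion inside U from its mean value, and the second hypothesis comes from f <= s outside U. *)
lemma excess_bound_arith:
  fixes a s m D r e l :: real
  assumes a: "0 \<le> a" and s: "0 \<le> s" and m: "0 < m" and r: "0 < r"
    and e: "0 < e" "e < l" "l \<le> 2 * (1 - r)"
    and D: "D \<le> e * a * m / 2" and complement: "(a - s) * (1 - r) \<le> e * a / 2"
  shows "D + (a - s) * r * m \<le> e * (l / (2 * r) + 1) / (l - e) * s * (r * m)"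
proof -
  define d where "d = l - e"
  have d: "0 < d" using e by (simp add: d_def)
  have "a * d * (2 * (1 - r)) = l * (a * (2 * (1 - r) - e)) + a * e * (l - 2 * (1 - r))"
    by (simp add: d_def algebra_simps)
  also have "\<dots> \<le> l * (2 * (1 - r) * s) + 0"
  proof (rule add_mono)
    show "l * (a * (2 * (1 - r) - e)) \<le> l * (2 * (1 - r) * s)"
      using complement e by (intro mult_left_mono) (auto simp: algebra_simps)
    show "a * e * (l - 2 * (1 - r)) \<le> 0"
      using a e by (intro mult_nonneg_nonpos) auto
  qed
  finally have "(a * d) * (2 * (1 - r)) \<le> (l * s) * (2 * (1 - r))"
    by (simp add: algebra_simps)
  moreover have "0 < 2 * (1 - r)" using e by linarith
  ultimately have ad: "a * d \<le> l * s" by (simp add: mult_le_cancel_right)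
  have "(D + (a - s) * r * m) * d = D * d + r * m * (a * d - s * d)"
    by (simp add: algebra_simps)
  also have "\<dots> \<le> e * m * (a * d) / 2 + r * m * (l * s - s * d)"
  proof (rule add_mono)
    show "D * d \<le> e * m * (a * d) / 2"
      using mult_right_mono[OF D, of d] d by (simp add: algebra_simps)
    show "r * m * (a * d - s * d) \<le> r * m * (l * s - s * d)"
      using ad r m by (intro mult_left_mono) auto
  qed
  also have "\<dots> \<le> e * m * (l * s) / 2 + r * m * (l * s - s * d)"
    using ad e m by (simp add: divide_right_mono mult_left_mono)
  also have "\<dots> = (e * (l / (2 * r) + 1) / (l - e) * s * (r * m)) * d"
    using r d by (simp add: d_def field_simps)
  finally show ?thesis
    using d by (rule mult_right_le_imp_le)
qed

section \<open>Centred cubes and density points\<close>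

lemma One_nth_cart: "(One :: real ^ 'n) $ i = 1"
proof -
  have "axis i (1::real) \<in> (Basis :: (real ^ 'n) set)" by simp
  then have "(One :: real ^ 'n) \<bullet> axis i 1 = 1" by (rule inner_sum_Basis)
  then show ?thesis by (simp only: cart_eq_inner_axis)
qed

lemma mem_centered_cube: "y \<in> centered_cube x r \<longleftrightarrow> (\<forall>i. \<bar>y$i - x$i\<bar> \<le> r)"
  by (simp only: centered_cube_def mem_box_cart vector_add_component vector_minus_component
      vector_scaleR_component One_nth_cart) (simp add: abs_le_iff algebra_simps conj_commute)

lemma centered_cube_subset_ball:
  fixes x :: "real ^ 'n"
  assumes "real CARD('n) * r < e"
  shows "centered_cube x r \<subseteq> ball x e"
proof
  fix y assume y: "y \<in> centered_cube x r"
  have "norm (y - x) \<le> (\<Sum>i\<in>UNIV. \<bar>(y - x)$i\<bar>)" by (rule norm_le_l1_cart)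
  also have "\<dots> \<le> (\<Sum>i\<in>(UNIV::'n set). r)"
    using y by (intro sum_mono) (auto simp: mem_centered_cube)
  finally show "y \<in> ball x e" using assms by (simp add: dist_norm norm_minus_commute)
qed

(* Off this null set every centred cube has positive measure, so the quotients in
   density_point are not the junk value 0 / 0. *)
definition null_cube_centres :: "(real ^ 'n) measure \<Rightarrow> (real ^ 'n) set" where
  "null_cube_centres M = {x. \<exists>r>0. centered_cube x r \<in> null_sets M}"

lemma AE_not_null_cube_centre:
  fixes M :: "(real ^ 'n) measure"
  assumes M: "sets M = sets borel"
  shows "AE x in M. x \<notin> null_cube_centres M"
proof -
  define F where "F = {box (x - r *\<^sub>R One) (x + r *\<^sub>R One) | x r. centered_cube x r \<in> null_sets M}"
  obtain F' where F': "F' \<subseteq> F" "countable F'" "\<Union>F' = \<Union>F"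
    using Lindelof[of F] unfolding F_def by blast
  have "S \<in> null_sets M" if S: "S \<in> F" for S
  proof -
    obtain x r where "S = box (x - r *\<^sub>R One) (x + r *\<^sub>R One)" "centered_cube x r \<in> null_sets M"
      using S unfolding F_def by blast
    then show ?thesis
      using M box_subset_cbox unfolding centered_cube_def
      by (metis null_sets_subset sets_borel open_box borel_open)
  qed
  then have "\<Union>F' \<in> null_sets M"
    using null_sets_UN'[OF F'(2), of id] F'(1) by auto
  moreover have "x \<in> \<Union>F" if x: "x \<in> null_cube_centres M" for x
  proof -
    obtain r where "0 < r" "centered_cube x r \<in> null_sets M"
      using x by (auto simp: null_cube_centres_def)
    then have "x \<in> box (x - r *\<^sub>R One) (x + r *\<^sub>R One)"
      by (simp only: mem_box_cart vector_add_component vector_minus_component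
          vector_scaleR_component One_nth_cart) simp
    then show ?thesis unfolding F_def using \<open>centered_cube x r \<in> null_sets M\<close> by blast
  qed
  ultimately show ?thesis using F'(3) by (intro AE_I'[of "\<Union>F'"]) auto
qed

lemma density_point_if_interior:
  fixes M :: "(real ^ 'n) measure"
  assumes M: "sets M = sets borel" and U: "open U" "U \<subseteq> W" "emeasure M U < \<infinity>"
    and x: "x \<in> U" "x \<notin> null_cube_centres M"
  shows "density_point M W x"
proof -
  obtain e where "0 < e" "ball x e \<subseteq> U" using U(1) x(1) by (meson open_contains_ball)
  define r0 where "r0 = e / real CARD('n)"
  have "0 < r0" using \<open>0 < e\<close> by (simp add: r0_def)
  have "measure M (W \<inter> centered_cube x r) / measure M (centered_cube x r) = 1"
    if r: "0 < r" "r < r0" for r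
  proof -
    have "real CARD('n) * r < e" using r by (simp add: r0_def field_simps)
    then have cube_U: "centered_cube x r \<subseteq> U"
      using centered_cube_subset_ball \<open>ball x e \<subseteq> U\<close> by blast
    have cube_sets: "centered_cube x r \<in> sets M"
      using M by (simp add: centered_cube_def)
    have "emeasure M (centered_cube x r) \<noteq> 0"
      using x(2) r cube_sets by (auto simp: null_cube_centres_def)
    moreover have "emeasure M (centered_cube x r) < \<infinity>"
      using emeasure_mono[OF cube_U, of M] U M by (auto simp: top_unique)
    ultimately have "measure M (centered_cube x r) \<noteq> 0"
      by (simp add: measure_def enn2real_eq_0_iff)
    moreover have "W \<inter> centered_cube x r = centered_cube x r" using cube_U U(2) by auto
    ultimately show ?thesis by simp
  qed
  then have "\<forall>\<^sub>F r in at_right 0.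
      measure M (W \<inter> centered_cube x r) / measure M (centered_cube x r) = 1"
    unfolding eventually_at_right_field using \<open>0 < r0\<close> by blast
  then show ?thesis unfolding density_point_def by (rule tendsto_eventually)
qed

section \<open>The non-increasing rearrangement\<close>

locale nonneg_integrable_on_finite_set =
  fixes M :: "(real ^ 'n) measure" and Q0 :: "(real ^ 'n) set" and f :: "real ^ 'n \<Rightarrow> real"
  assumes admissible: "admissible_measure M"
    and Q0_sets: "Q0 \<in> sets M" and Q0_finite: "emeasure M Q0 < \<infinity>"
    and nonneg: "\<And>x. x \<in> Q0 \<Longrightarrow> 0 \<le> f x" and integrable_on_Q0: "set_integrable M Q0 f"
begin

lemma sets_M: "sets M = sets borel"
  using admissible by (simp add: admissible_measure_def)

lemma space_M: "space M = UNIV"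
  using sets_eq_imp_space_eq[OF sets_M] by simp

lemma emeasure_subset_finite: "A \<subseteq> Q0 \<Longrightarrow> A \<in> sets M \<Longrightarrow> emeasure M A < \<infinity>"
  using emeasure_mono[of A Q0 M] Q0_sets Q0_finite by (auto simp: top_unique less_top)

lemma emeasure_subset_eq: "A \<subseteq> Q0 \<Longrightarrow> A \<in> sets M \<Longrightarrow> emeasure M A = ennreal (measure M A)"
  using emeasure_subset_finite by (simp add: emeasure_eq_ennreal_measure less_top)

lemma measure_subset_mono: "A \<subseteq> B \<Longrightarrow> B \<subseteq> Q0 \<Longrightarrow> A \<in> sets M \<Longrightarrow> B \<in> sets M \<Longrightarrow> measure M A \<le> measure M B"
  using emeasure_subset_finite by (intro measure_mono_fmeasurable) (auto simp: fmeasurable_def)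

lemma borel_measurable_restricted [measurable]: "(\<lambda>x. indicator Q0 x * f x) \<in> borel_measurable M"
  using integrable_on_Q0 unfolding set_integrable_def by (simp add: integrable_iff_bounded)

lemma integrable_restricted: "integrable M (\<lambda>x. indicator Q0 x * f x)"
  using integrable_on_Q0 by (simp add: set_integrable_def)

lemma superlevel_sets: "{x\<in>Q0. c < f x} \<in> sets M"
proof -
  have "{x\<in>Q0. c < f x} = Q0 \<inter> {x\<in>space M. c < indicator Q0 x * f x}"
    by (auto simp: space_M indicator_def)
  also have "\<dots> \<in> sets M" using Q0_sets by measurable
  finally show ?thesis .
qed

lemma superlevel_ge_sets: "{x\<in>Q0. c \<le> f x} \<in> sets M"
proof -
  have "{x\<in>Q0. c \<le> f x} = Q0 \<inter> {x\<in>space M. c \<le> indicator Q0 x * f x}"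
    by (auto simp: space_M indicator_def)
  also have "\<dots> \<in> sets M" using Q0_sets by measurable
  finally show ?thesis .
qed

lemma integrable_indicator_mult:
  assumes "A \<in> sets M" "A \<subseteq> Q0"
  shows "integrable M (\<lambda>x. indicator A x * f x)"
proof -
  have "integrable M (\<lambda>x. indicator A x * (indicator Q0 x * f x))"
    using integrable_restricted assms(1)
    by (intro integrable_mult_indicator[of _ _ "\<lambda>x. indicator Q0 x * f x", simplified])
  moreover have "indicator A x * (indicator Q0 x * f x) = indicator A x * f x" for x
    using assms(2) by (auto simp: indicator_def)
  ultimately show ?thesis by simp
qed

lemma integrable_indicator_const:
  fixes c :: real
  assumes "A \<in> sets M" "A \<subseteq> Q0"
  shows "integrable M (\<lambda>x. indicator A x * c)"
  using emeasure_subset_finite[OF assms(2,1)] assms(1) by (intro integrable_mult_left) auto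

lemma integrable_indicator_mult_diff:
  assumes "A \<in> sets M" "A \<subseteq> Q0"
  shows "integrable M (\<lambda>x. indicator A x * (f x - c))"
    and "(LINT x|M. indicator A x * (f x - c)) = (LINT x|M. indicator A x * f x) - c * measure M A"
proof -
  have eq: "(\<lambda>x. indicator A x * (f x - c)) = (\<lambda>x. indicator A x * f x - indicator A x * c)"
    by (auto simp: fun_eq_iff algebra_simps)
  show "integrable M (\<lambda>x. indicator A x * (f x - c))"
    and "(LINT x|M. indicator A x * (f x - c)) = (LINT x|M. indicator A x * f x) - c * measure M A"
    unfolding eq using integrable_indicator_mult[OF assms] integrable_indicator_const[OF assms]
      assms(1)
    by (simp_all add: space_M)
qed

abbreviation rearr_candidates :: "real \<Rightarrow> real set" where
  "rearr_candidates \<tau> \<equiv> {Inf ((\<lambda>x. \<bar>f x\<bar>) ` E) | E. E \<in> sets M \<and> E \<subseteq> Q0 \<and> measure M E = \<tau>}"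

lemma Inf_abs_le:
  assumes "x \<in> E" shows "Inf ((\<lambda>x. \<bar>f x\<bar>) ` E) \<le> \<bar>f x\<bar>"
  using assms by (intro cInf_lower) (auto intro: bdd_belowI[where m=0])

lemma rearr_candidates_bdd_above:
  assumes "0 < \<tau>" shows "bdd_above (rearr_candidates \<tau>)"
proof (rule bdd_aboveI)
  fix v assume "v \<in> rearr_candidates \<tau>"
  then obtain E where E: "E \<in> sets M" "E \<subseteq> Q0" "measure M E = \<tau>"
    and v: "v = Inf ((\<lambda>x. \<bar>f x\<bar>) ` E)"
    by blast
  have "integrable M (\<lambda>x. indicator E x * v)"
    using E(1,2) by (rule integrable_indicator_const)
  moreover have "integrable M (\<lambda>x. indicator Q0 x * \<bar>f x\<bar>)"
    using set_integrable_abs[OF integrable_on_Q0] unfolding set_integrable_def by simp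
  ultimately have "(LINT x|M. indicator E x * v) \<le> (LINT x|M. indicator Q0 x * \<bar>f x\<bar>)"
    using E(2) v Inf_abs_le by (intro integral_mono) (auto simp: indicator_def)
  then have "v * \<tau> \<le> (LINT x|M. indicator Q0 x * \<bar>f x\<bar>)"
    using E by (simp add: space_M mult.commute)
  then show "v \<le> (LINT x|M. indicator Q0 x * \<bar>f x\<bar>) / \<tau>"
    using assms by (simp add: field_simps)
qed

lemma rearr_candidates_nonempty:
  assumes "0 \<le> \<tau>" "\<tau> \<le> measure M Q0" shows "rearr_candidates \<tau> \<noteq> {}"
proof -
  obtain E where "E \<in> sets M" "E \<subseteq> Q0" "measure M E = \<tau>"
    using exists_subset_measure_eq[of M Q0 \<tau>] admissible Q0_sets Q0_finite assms
    by (auto simp: admissible_measure_def)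
  then show ?thesis by blast
qed

lemma rearr_nonneg:
  assumes "0 < \<tau>" "\<tau> \<le> measure M Q0" shows "0 \<le> rearr M Q0 f \<tau>"
proof -
  obtain E where E: "E \<in> sets M" "E \<subseteq> Q0" "measure M E = \<tau>"
    using rearr_candidates_nonempty[of \<tau>] assms by auto
  then have "E \<noteq> {}" using assms(1) by auto
  then have "0 \<le> Inf ((\<lambda>x. \<bar>f x\<bar>) ` E)" by (intro cInf_greatest) auto
  also have "\<dots> \<le> rearr M Q0 f \<tau>"
    unfolding rearr_def using E rearr_candidates_bdd_above[OF assms(1)] by (intro cSup_upper) auto
  finally show ?thesis .
qed

lemma le_measure_superlevel_if_less_rearr:
  assumes "0 < \<tau>" "\<tau> \<le> measure M Q0" "c < rearr M Q0 f \<tau>"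
  shows "\<tau> \<le> measure M {x\<in>Q0. c < f x}"
proof -
  obtain E where E: "E \<in> sets M" "E \<subseteq> Q0" "measure M E = \<tau>" and c: "c < Inf ((\<lambda>x. \<bar>f x\<bar>) ` E)"
    using assms(3) assms(1,2)
      less_cSup_iff[OF rearr_candidates_nonempty rearr_candidates_bdd_above[OF assms(1)]]
    unfolding rearr_def by auto
  have "E \<subseteq> {x\<in>Q0. c < f x}"
    using E(2) c Inf_abs_le nonneg by (fastforce intro: less_le_trans)
  then show ?thesis
    using E superlevel_sets measure_subset_mono by fastforce
qed

lemma le_rearr_if_le_measure_superlevel:
  assumes "0 < \<tau>" "\<tau> \<le> measure M {x\<in>Q0. c \<le> f x}"
  shows "c \<le> rearr M Q0 f \<tau>"
proof -
  obtain E where E: "E \<in> sets M" "E \<subseteq> {x\<in>Q0. c \<le> f x}" "measure M E = \<tau>"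
    using exists_subset_measure_eq[of M "{x\<in>Q0. c \<le> f x}" \<tau>] admissible superlevel_ge_sets
      emeasure_subset_finite assms
    by (auto simp: admissible_measure_def)
  then have "E \<noteq> {}" using assms(1) by auto
  then have "c \<le> Inf ((\<lambda>x. \<bar>f x\<bar>) ` E)" using E(2) by (intro cInf_greatest) auto
  also have "\<dots> \<le> rearr M Q0 f \<tau>"
    unfolding rearr_def using E rearr_candidates_bdd_above[OF assms(1)] by (intro cSup_upper) auto
  finally show ?thesis .
qed

lemma measure_superlevel_rearr_le:
  assumes "0 < t"
  shows "measure M {x\<in>Q0. rearr M Q0 f t < f x} \<le> t"
proof -
  define s where "s = rearr M Q0 f t"
  define A where "A n = {x\<in>Q0. s + 1 / Suc n \<le> f x}" for n
  have A_sets: "A n \<in> sets M" for n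
    by (simp add: A_def superlevel_ge_sets)
  have "measure M (A n) < t" for n
    using le_rearr_if_le_measure_superlevel[OF assms, of "s + 1 / Suc n"]
    by (force simp: A_def s_def)
  moreover have "(\<lambda>n. measure M (A n)) \<longlonglongrightarrow> measure M (\<Union>n. A n)"
  proof (rule Lim_measure_incseq)
    have "1 / real (Suc n) \<le> 1 / real (Suc m)" if "m \<le> n" for m n
      using that by (intro divide_left_mono) auto
    then show "incseq A"
      by (force simp: incseq_def A_def intro: order_trans[rotated])
    have "(\<Union>n. A n) \<subseteq> Q0" by (auto simp: A_def)
    then show "emeasure M (\<Union>n. A n) \<noteq> \<infinity>"
      using emeasure_subset_finite[of "\<Union>n. A n"] A_sets by auto
  qed (use A_sets in auto)
  moreover have "(\<Union>n. A n) = {x\<in>Q0. s < f x}"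
  proof
    show "(\<Union>n. A n) \<subseteq> {x\<in>Q0. s < f x}"
      by (auto simp: A_def) (smt (verit) of_nat_0_le_iff divide_pos_pos)
    show "{x\<in>Q0. s < f x} \<subseteq> (\<Union>n. A n)"
    proof
      fix x assume x: "x \<in> {x\<in>Q0. s < f x}"
      then obtain n where "1 / Suc n < f x - s"
        by (metis diff_gt_0_iff_gt nat_approx_posE of_nat_Suc mem_Collect_eq)
      then have "x \<in> A n" using x by (auto simp: A_def)
      then show "x \<in> (\<Union>n. A n)" by blast
    qed
  qed
  ultimately show ?thesis unfolding s_def
    by (metis (no_types, lifting) LIMSEQ_le_const2 less_imp_le)
qed

lemma emeasure_superlevel_rearr_le:
  fixes s c :: real
  assumes S: "S \<subseteq> {0<..measure M {x\<in>Q0. s < f x}}" and "0 < c"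
  shows "emeasure lborel {\<tau>. c < indicator S \<tau> * rearr M Q0 f \<tau>} \<le> emeasure M {x\<in>Q0. max s c < f x}"
proof -
  have sets: "{x\<in>Q0. max s c < f x} \<in> sets M"
    by (rule superlevel_sets)
  have "{\<tau>. c < indicator S \<tau> * rearr M Q0 f \<tau>} \<subseteq> {0<..measure M {x\<in>Q0. max s c < f x}}"
  proof
    fix \<tau> assume "\<tau> \<in> {\<tau>. c < indicator S \<tau> * rearr M Q0 f \<tau>}"
    then have \<tau>: "\<tau> \<in> S" and c: "c < rearr M Q0 f \<tau>"
      using \<open>0 < c\<close> by (auto split: split_indicator_asm)
    have "measure M {x\<in>Q0. s < f x} \<le> measure M Q0"
      using superlevel_sets Q0_sets by (intro measure_subset_mono) auto
    then have "\<tau> \<le> measure M {x\<in>Q0. c < f x}"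
      using \<tau> S c by (intro le_measure_superlevel_if_less_rearr) auto
    moreover have "{x\<in>Q0. max s c < f x} = {x\<in>Q0. s < f x}
        \<or> {x\<in>Q0. max s c < f x} = {x\<in>Q0. c < f x}"
      by (auto simp: max_def)
    ultimately show "\<tau> \<in> {0<..measure M {x\<in>Q0. max s c < f x}}"
      using \<tau> S by auto
  qed
  then show ?thesis
    using emeasure_mono[of _ "{0<..measure M {x\<in>Q0. max s c < f x}}" lborel]
      emeasure_subset_eq[OF _ sets]
    by simp
qed

lemma nn_integral_superlevel_layer_cake:
  fixes s :: real
  defines "E \<equiv> {x\<in>Q0. s < f x}"
  shows "(\<integral>\<^sup>+x. ennreal (indicator E x * f x) \<partial>M)
    = (\<integral>\<^sup>+c. indicator {0<..} c * emeasure M {x\<in>Q0. max s c < f x} \<partial>lborel)"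
proof -
  define N where "N = restrict_space M E"
  have E_sets: "E \<in> sets M" and E_Q0: "E \<subseteq> Q0"
    by (auto simp: E_def superlevel_sets)
  have "finite_measure N"
    using emeasure_subset_finite[OF E_Q0 E_sets] E_sets
    by (intro finite_measureI)
      (simp add: N_def space_restrict_space space_M emeasure_restrict_space)
  then have N_finite: "sigma_finite_measure N"
    by (simp add: finite_measure_def)
  have f_N: "f \<in> borel_measurable N"
  proof -
    have "(\<lambda>x. indicator Q0 x * f x) \<in> borel_measurable N"
      unfolding N_def by (intro measurable_restrict_space1) measurable
    moreover have "f \<in> borel_measurable N \<longleftrightarrow> (\<lambda>x. indicator Q0 x * f x) \<in> borel_measurable N"
      using E_Q0 by (intro measurable_cong) (auto simp: N_def space_restrict_space space_M)
    ultimately show ?thesis by simp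
  qed
  have levels: "emeasure N {x\<in>space N. c < f x} = emeasure M {x\<in>Q0. max s c < f x}" for c
  proof -
    have "{x\<in>space N. c < f x} = {x\<in>Q0. max s c < f x}"
      by (auto simp: N_def E_def space_restrict_space space_M)
    moreover have "emeasure N {x\<in>Q0. max s c < f x} = emeasure M {x\<in>Q0. max s c < f x}"
      unfolding N_def using E_sets by (intro emeasure_restrict_space) (auto simp: space_M E_def)
    ultimately show ?thesis by simp
  qed
  have "(\<integral>\<^sup>+x. ennreal (indicator E x * f x) \<partial>M) = (\<integral>\<^sup>+x. ennreal (f x) \<partial>N)"
    using E_sets unfolding N_def
    by (subst nn_integral_restrict_space)
      (auto simp: space_M indicator_def intro!: nn_integral_cong)
  also have "\<dots> = (\<integral>\<^sup>+c. indicator {0<..} c * emeasure N {x\<in>space N. c < f x} \<partial>lborel)"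
    using nonneg E_Q0
    by (intro nn_integral_layer_cake N_finite f_N) (auto simp: N_def space_restrict_space)
  finally show ?thesis
    by (simp add: levels)
qed

lemma integral_rearr_le_integral_superlevel:
  fixes s :: real
  defines "E \<equiv> {x\<in>Q0. s < f x}"
  assumes S: "S \<subseteq> {0<..measure M E}"
    and integrable: "integrable lborel (\<lambda>\<tau>. indicator S \<tau> * rearr M Q0 f \<tau>)"
  shows "(LINT \<tau>|lborel. indicator S \<tau> * rearr M Q0 f \<tau>) \<le> (LINT x|M. indicator E x * f x)"
proof -
  define h where "h \<tau> = indicator S \<tau> * rearr M Q0 f \<tau>" for \<tau>
  have E_sets: "E \<in> sets M" and E_Q0: "E \<subseteq> Q0"
    by (auto simp: E_def superlevel_sets)
  have "measure M E \<le> measure M Q0"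
    using E_sets E_Q0 Q0_sets measure_subset_mono by blast
  then have h_nonneg: "0 \<le> h \<tau>" for \<tau>
    using S rearr_nonneg by (auto simp: h_def indicator_def)
  have [measurable]: "h \<in> borel_measurable lborel"
    using integrable by (simp add: h_def[abs_def])
  have "ennreal (LINT \<tau>|lborel. h \<tau>) = (\<integral>\<^sup>+\<tau>. ennreal (h \<tau>) \<partial>lborel)"
    using integrable h_nonneg
    by (intro nn_integral_eq_integral[symmetric]) (auto simp: h_def[abs_def])
  also have "\<dots> = (\<integral>\<^sup>+c. indicator {0<..} c * emeasure lborel {\<tau>. c < h \<tau>} \<partial>lborel)"
    using nn_integral_layer_cake[of lborel h] h_nonneg
    by (simp add: lborel.sigma_finite_measure_axioms)
  also have "\<dots> \<le> (\<integral>\<^sup>+c. indicator {0<..} c * emeasure M {x\<in>Q0. max s c < f x} \<partial>lborel)"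
  proof (intro nn_integral_mono)
    fix c :: real
    show "indicator {0<..} c * emeasure lborel {\<tau>. c < h \<tau>}
        \<le> indicator {0<..} c * emeasure M {x\<in>Q0. max s c < f x}"
      using emeasure_superlevel_rearr_le[OF S[unfolded E_def], of c]
      by (cases "0 < c") (simp_all add: h_def del: max_less_iff_conj)
  qed
  also have "\<dots> = ennreal (LINT x|M. indicator E x * f x)"
    using integrable_indicator_mult[OF E_sets E_Q0] nonneg E_Q0
    unfolding E_def nn_integral_superlevel_layer_cake[symmetric]
    by (intro nn_integral_eq_integral) (auto simp: indicator_def)
  finally have "ennreal (LINT \<tau>|lborel. h \<tau>) \<le> ennreal (LINT x|M. indicator E x * f x)" .
  moreover have "0 \<le> (LINT x|M. indicator E x * f x)"
    using nonneg E_Q0 by (intro Bochner_Integration.integral_nonneg) (auto simp: indicator_def)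
  ultimately show ?thesis by (simp add: h_def)
qed

lemma integral_rearr_le:
  fixes t :: real
  defines "s \<equiv> rearr M Q0 f t"
  defines "E \<equiv> {x\<in>Q0. s < f x}"
  assumes t: "0 < t" "t \<le> measure M Q0"
    and integrable: "integrable lborel (\<lambda>\<tau>. indicator {0<..<t} \<tau> * rearr M Q0 f \<tau>)"
  shows "(LINT \<tau>|lborel. indicator {0<..<t} \<tau> * rearr M Q0 f \<tau>)
    \<le> (LINT x|M. indicator E x * f x) + (t - measure M E) * s"
proof -
  define a where "a = measure M E"
  define S1 where "S1 = {0<..<t} \<inter> {..a}"
  define S2 where "S2 = {0<..<t} \<inter> {a<..}"
  have a_le: "a \<le> t"
    using measure_superlevel_rearr_le[OF t(1)] by (simp add: a_def E_def s_def)
  have "0 \<le> a" by (simp add: a_def)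
  then have S2_eq: "S2 = {a<..<t}" by (auto simp: S2_def)
  have integrable_S: "integrable lborel (\<lambda>\<tau>. indicator S \<tau> * rearr M Q0 f \<tau>)"
    if "S = {0<..<t} \<inter> T" "T \<in> sets borel" for S T
  proof -
    have "integrable lborel (\<lambda>\<tau>. indicator {0<..<t} \<tau> * rearr M Q0 f \<tau> * indicator T \<tau>)"
      using integrable that(2) by (intro integrable_real_mult_indicator) auto
    then show ?thesis
      using that(1) by (simp add: indicator_inter_arith mult_ac)
  qed
  have int_S1: "(LINT \<tau>|lborel. indicator S1 \<tau> * rearr M Q0 f \<tau>) \<le> (LINT x|M. indicator E x * f x)"
    unfolding E_def a_def S1_def
    by (intro integral_rearr_le_integral_superlevel integrable_S) (auto simp: E_def a_def)
  have int_S2: "(LINT \<tau>|lborel. indicator S2 \<tau> * rearr M Q0 f \<tau>)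
      \<le> (LINT \<tau>|lborel. indicator S2 \<tau> * s)"
  proof (rule integral_mono)
    show "integrable lborel (\<lambda>\<tau>. indicator S2 \<tau> * s)"
      using emeasure_lborel_Ioo[of a t] a_le S2_eq
      by (intro integrable_mult_left integrable_real_indicator) auto
    show "indicator S2 \<tau> * rearr M Q0 f \<tau> \<le> indicator S2 \<tau> * s" for \<tau>
    proof (cases "\<tau> \<in> S2")
      case True
      then have "\<not> \<tau> \<le> measure M E" by (simp add: S2_def a_def)
      then have "rearr M Q0 f \<tau> \<le> s"
        using True t le_measure_superlevel_if_less_rearr[of \<tau> s] by (force simp: S2_def E_def)
      then show ?thesis using True by simp
    qed simp
  qed (use integrable_S[of S2] in \<open>auto simp: S2_def\<close>)
  have "indicator {0<..<t} \<tau> * rearr M Q0 f \<tau>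
      = indicator S1 \<tau> * rearr M Q0 f \<tau> + indicator S2 \<tau> * rearr M Q0 f \<tau>" for \<tau>
    by (auto simp: S1_def S2_def indicator_def)
  then have "(LINT \<tau>|lborel. indicator {0<..<t} \<tau> * rearr M Q0 f \<tau>)
      = (LINT \<tau>|lborel. indicator S1 \<tau> * rearr M Q0 f \<tau>)
        + (LINT \<tau>|lborel. indicator S2 \<tau> * rearr M Q0 f \<tau>)"
    using integrable_S[OF S1_def] integrable_S[OF S2_def] by simp
  moreover have "(LINT \<tau>|lborel. indicator S2 \<tau> * s) = (t - measure M E) * s"
    using a_le by (simp add: S2_eq a_def)
  ultimately show ?thesis
    using int_S1 int_S2 by linarith
qed

lemma rearr2_le_rearr_plus_excess:
  fixes t :: real
  defines "s \<equiv> rearr M Q0 f t"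
  defines "E \<equiv> {x\<in>Q0. s < f x}"
  assumes t: "0 < t" "t \<le> measure M Q0"
  shows "t * rearr2 M Q0 f t \<le> t * s + (LINT x|M. indicator E x * (f x - s))"
proof -
  have E_sets: "E \<in> sets M" and E_Q0: "E \<subseteq> Q0"
    by (auto simp: E_def superlevel_sets)
  have excess_nonneg: "0 \<le> (LINT x|M. indicator E x * (f x - s))"
    by (intro Bochner_Integration.integral_nonneg) (auto simp: E_def indicator_def)
  have "einterval 0 (ereal t) = {0<..<t}"
    by (auto simp: einterval_def)
  then have "t * rearr2 M Q0 f t = (LINT \<tau>|lborel. indicator {0<..<t} \<tau> * rearr M Q0 f \<tau>)"
    using t(1) by (simp add: rearr2_def interval_lebesgue_integral_def set_lebesgue_integral_def)
  also have "\<dots> \<le> t * s + (LINT x|M. indicator E x * (f x - s))"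
  proof (cases "integrable lborel (\<lambda>\<tau>. indicator {0<..<t} \<tau> * rearr M Q0 f \<tau>)")
    case True
    then show ?thesis
      using integral_rearr_le[OF t True] integrable_indicator_mult_diff(2)[OF E_sets E_Q0, of s]
      by (simp add: E_def s_def algebra_simps)
  next
    case False
    then show ?thesis
      using excess_nonneg rearr_nonneg[OF t] t(1) by (simp add: not_integrable_integral_eq s_def)
  qed
  finally show ?thesis .
qed

section \<open>The excess over a level on the cubes of a cover\<close>

lemma abs_integral_deviation_le_half_osc:
  assumes Q: "Q \<in> sets M" "Q \<subseteq> Q0" "0 < measure M Q" and A: "A \<in> sets M"
  shows "\<bar>LINT x|M. indicator (Q \<inter> A) x * (f x - avg M Q f)\<bar> \<le> osc M Q f * measure M Q / 2"
proof -
  define a where "a = avg M Q f"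
  define dev where "dev B = (LINT x|M. indicator B x * (f x - a))" for B
  define absdev where "absdev B = (LINT x|M. indicator B x * \<bar>f x - a\<bar>)" for B
  have integrable: "integrable M (\<lambda>x. indicator B x * (f x - a))"
    and integrable_abs: "integrable M (\<lambda>x. indicator B x * \<bar>f x - a\<bar>)"
    if "B \<subseteq> Q" "B \<in> sets M" for B
  proof -
    show "integrable M (\<lambda>x. indicator B x * (f x - a))"
      using that Q(2) by (intro integrable_indicator_mult_diff) auto
    then have "integrable M (\<lambda>x. \<bar>indicator B x * (f x - a)\<bar>)" by auto
    then show "integrable M (\<lambda>x. indicator B x * \<bar>f x - a\<bar>)"
      by (simp add: abs_mult)
  qed
  have parts: "Q \<inter> A \<subseteq> Q" "Q \<inter> A \<in> sets M" "Q - A \<subseteq> Q" "Q - A \<in> sets M"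
    using Q A by auto
  have split: "indicator Q x * g x = indicator (Q \<inter> A) x * g x + indicator (Q - A) x * g x"
    for x and g :: "_ \<Rightarrow> real"
    by (auto simp: indicator_def)
  have "dev Q = 0"
    using integrable_indicator_mult_diff(2)[OF Q(1,2), of a] Q(3)
    by (simp add: dev_def a_def avg_def set_lebesgue_integral_def)
  moreover have "dev Q = dev (Q \<inter> A) + dev (Q - A)"
    unfolding dev_def split[of _ "\<lambda>x. f x - a"]
    using integrable[OF parts(1,2)] integrable[OF parts(3,4)] by simp
  moreover have "absdev Q = absdev (Q \<inter> A) + absdev (Q - A)"
    unfolding absdev_def split[of _ "\<lambda>x. \<bar>f x - a\<bar>"]
    using integrable_abs[OF parts(1,2)] integrable_abs[OF parts(3,4)] by simp
  moreover have "\<bar>dev B\<bar> \<le> absdev B" for B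
    using integral_abs_bound[of M "\<lambda>x. indicator B x * (f x - a)"]
    by (simp add: dev_def absdev_def abs_mult)
  moreover have "absdev Q = osc M Q f * measure M Q"
    using Q(3) by (simp add: absdev_def a_def osc_def set_lebesgue_integral_def)
  ultimately have "\<bar>dev (Q \<inter> A)\<bar> \<le> osc M Q f * measure M Q / 2"
    by (smt (verit) field_sum_of_halves)
  then show ?thesis by (simp add: dev_def a_def)
qed

lemma avg_nonneg: "Q \<subseteq> Q0 \<Longrightarrow> 0 \<le> avg M Q f"
  using nonneg unfolding avg_def set_lebesgue_integral_def
  by (intro mult_nonneg_nonneg Bochner_Integration.integral_nonneg) (auto simp: indicator_def)

lemma avg_minus_level_le:
  fixes r e s :: real
  assumes Q: "Q \<in> sets M" "Q \<subseteq> Q0" "0 < measure M Q" and U: "U \<in> sets M"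
    and portion: "measure M (Q \<inter> U) = r * measure M Q"
    and below: "\<And>x. x \<in> Q - U \<Longrightarrow> f x \<le> s"
    and osc: "osc M Q f \<le> e * avg M Q f"
  shows "(avg M Q f - s) * (1 - r) \<le> e * avg M Q f / 2"
proof -
  define m where "m = measure M Q"
  define a where "a = avg M Q f"
  have m: "0 < m" using Q(3) by (simp add: m_def)
  have QU: "Q \<inter> U \<in> sets M" "Q \<inter> U \<subseteq> Q0" and QmU: "Q - U \<in> sets M" "Q - U \<subseteq> Q0"
    using Q U by auto
  have "measure M Q = measure M (Q \<inter> U) + measure M (Q - U)"
    using QU QmU emeasure_subset_finite
    by (subst measure_Union[symmetric]) (auto simp: less_top intro!: arg_cong[where f="measure M"])
  then have measure_QmU: "measure M (Q - U) = (1 - r) * m"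
    using portion by (simp add: m_def algebra_simps)
  have "UNIV - U \<in> sets M"
    using U sets.compl_sets[of U M] by (simp add: space_M)
  then have "\<bar>LINT x|M. indicator (Q - U) x * (f x - a)\<bar> \<le> osc M Q f * m / 2"
    using abs_integral_deviation_le_half_osc[OF Q] by (simp add: a_def m_def Diff_eq)
  then have "-(e * a * m / 2) \<le> (LINT x|M. indicator (Q - U) x * (f x - a))"
    using osc m by (smt (verit) a_def divide_right_mono mult_right_mono)
  also have "\<dots> \<le> (LINT x|M. indicator (Q - U) x * (s - a))"
    using below QmU
    by (intro integral_mono integrable_indicator_mult_diff integrable_indicator_const)
      (auto simp: indicator_def)
  also have "\<dots> = (s - a) * ((1 - r) * m)"
    using QmU measure_QmU by (simp add: space_M)
  finally have "(a - s) * (1 - r) * m \<le> e * a / 2 * m"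
    by (simp add: algebra_simps)
  then show ?thesis
    using m unfolding a_def by (metis mult_le_cancel_right_pos)
qed

lemma integral_excess_on_portion_le:
  fixes r e l s :: real
  assumes Q: "Q \<in> sets M" "Q \<subseteq> Q0" and U: "U \<in> sets M"
    and portion: "measure M (Q \<inter> U) = r * measure M Q" and r: "0 < r"
    and below: "\<And>x. x \<in> Q - U \<Longrightarrow> f x \<le> s" and s: "0 \<le> s"
    and osc: "0 < measure M Q \<Longrightarrow> osc M Q f \<le> e * avg M Q f"
    and e: "0 < e" "e < l" "l \<le> 2 * (1 - r)"
  shows "(LINT x|M. indicator (Q \<inter> U) x * (f x - s))
    \<le> e * (l / (2 * r) + 1) / (l - e) * s * measure M (Q \<inter> U)"
proof (cases "measure M Q = 0")
  case True
  have "emeasure M (Q \<inter> U) = 0"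
    using emeasure_subset_eq[of "Q \<inter> U"] Q U portion True by auto
  then have "AE x in M. indicator (Q \<inter> U) x * (f x - s) = 0"
    using Q U by (intro AE_I'[of "Q \<inter> U"]) (auto split: split_indicator_asm)
  then show ?thesis
    using portion True by (simp add: integral_eq_zero_AE)
next
  case False
  define m where "m = measure M Q"
  define a where "a = avg M Q f"
  have m: "0 < m" using False measure_nonneg[of M Q] unfolding m_def by linarith
  have a: "0 \<le> a"
    using avg_nonneg[OF Q(2)] by (simp add: a_def)
  have QU: "Q \<inter> U \<in> sets M" "Q \<inter> U \<subseteq> Q0"
    using Q U by auto
  have "(LINT x|M. indicator (Q \<inter> U) x * (f x - a)) \<le> osc M Q f * m / 2"
    using abs_integral_deviation_le_half_osc[OF Q m[unfolded m_def] U] by (simp add: a_def m_def)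
  also have "\<dots> \<le> e * a * m / 2"
    using osc m by (simp add: m_def a_def mult_right_mono)
  finally have D: "(LINT x|M. indicator (Q \<inter> U) x * (f x - a)) \<le> e * a * m / 2" .
  have complement: "(a - s) * (1 - r) \<le> e * a / 2"
    using avg_minus_level_le[OF Q m[unfolded m_def] U portion below] osc m
    by (simp add: a_def m_def)
  have "(LINT x|M. indicator (Q \<inter> U) x * (f x - s))
      = (LINT x|M. indicator (Q \<inter> U) x * (f x - a)) + (a - s) * r * m"
    unfolding integrable_indicator_mult_diff(2)[OF QU] portion
    by (simp add: m_def algebra_simps)
  also have "\<dots> \<le> e * (l / (2 * r) + 1) / (l - e) * s * (r * m)"
    using excess_bound_arith[OF a s m r e D complement] .
  finally show ?thesis
    using portion by (simp add: m_def)
qed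

lemma integral_excess_on_cube_le:
  fixes s r e l :: real
  defines "E \<equiv> {x\<in>Q0. s < f x}"
  defines "C \<equiv> e * (l / (2 * r) + 1) / (l - e)"
  assumes W: "W \<in> sets M" "E \<subseteq> W"
    and Q: "Q \<in> sets M" "Q \<subseteq> Q0" "measure M (Q \<inter> W) = r * measure M Q"
    and osc: "0 < measure M Q \<Longrightarrow> osc M Q f \<le> e * avg M Q f"
    and s: "0 \<le> s" and r: "0 < r" and e: "0 < e" "e < l" "l \<le> 2 * (1 - r)"
  shows "(LINT x|M. indicator (Q \<inter> E) x * (f x - s))
    \<le> C * s * measure M (Q \<inter> W) + s * measure M (Q \<inter> (W - E))"
proof -
  have QW: "Q \<inter> W \<in> sets M" "Q \<inter> W \<subseteq> Q0" and QWmE: "Q \<inter> (W - E) \<in> sets M" "Q \<inter> (W - E) \<subseteq> Q0"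
    using Q(1,2) W superlevel_sets by (auto simp: E_def)
  have "indicator (Q \<inter> E) x * (f x - s)
      = indicator (Q \<inter> W) x * (f x - s) - indicator (Q \<inter> (W - E)) x * (f x - s)" for x
    using W(2) by (auto simp: indicator_def)
  then have "(LINT x|M. indicator (Q \<inter> E) x * (f x - s))
      = (LINT x|M. indicator (Q \<inter> W) x * (f x - s))
        - (LINT x|M. indicator (Q \<inter> (W - E)) x * (f x - s))"
    using integrable_indicator_mult_diff(1)[OF QW] integrable_indicator_mult_diff(1)[OF QWmE]
    by simp
  moreover have "f x \<le> s" if "x \<in> Q - W" for x
    using that Q(2) W(2) by (auto simp: E_def not_less)
  then have "(LINT x|M. indicator (Q \<inter> W) x * (f x - s)) \<le> C * s * measure M (Q \<inter> W)"
    unfolding C_def by (rule integral_excess_on_portion_le[OF Q(1,2) W(1) Q(3) r _ s osc e])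
  moreover have "0 \<le> (LINT x|M. indicator (Q \<inter> (W - E)) x * f x)"
    using QWmE(2) nonneg by (intro Bochner_Integration.integral_nonneg) (auto simp: indicator_def)
  then have "- (s * measure M (Q \<inter> (W - E))) \<le> (LINT x|M. indicator (Q \<inter> (W - E)) x * (f x - s))"
    unfolding integrable_indicator_mult_diff(2)[OF QWmE] by simp
  ultimately show ?thesis by linarith
qed

lemma integral_excess_le_of_covering:
  fixes s r e l :: real and B :: nat and Q :: "nat \<Rightarrow> (real ^ 'n) set"
  defines "E \<equiv> {x\<in>Q0. s < f x}"
  defines "C \<equiv> e * (l / (2 * r) + 1) / (l - e)"
  assumes W: "W \<in> sets M" "E \<subseteq> W" "W \<subseteq> Q0"
    and Q: "\<And>i. Q i \<in> sets M" "\<And>i. Q i \<subseteq> Q0" "\<And>i. measure M (Q i \<inter> W) = r * measure M (Q i)"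
    and osc: "\<And>i. 0 < measure M (Q i) \<Longrightarrow> osc M (Q i) f \<le> e * avg M (Q i) f"
    and overlap: "\<And>x. finite {i. x \<in> Q i} \<and> card {i. x \<in> Q i} \<le> B"
    and cover: "AE x in M. x \<in> E \<longrightarrow> x \<in> (\<Union>i. Q i)"
    and s: "0 \<le> s" and r: "0 < r" and e: "0 < e" "e < l" "l \<le> 2 * (1 - r)"
  shows "(LINT x|M. indicator E x * (f x - s)) \<le> B * (C * s * measure M W + s * measure M (W - E))"
proof -
  define \<psi> where "\<psi> x = indicator E x * (f x - s)" for x
  define \<phi> where "\<phi> x = C * s * indicator W x + s * indicator (W - E) x" for x
  have E: "E \<in> sets M" "E \<subseteq> Q0"
    by (auto simp: E_def superlevel_sets)
  have WmE: "W - E \<in> sets M" "W - E \<subseteq> Q0"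
    using W E by auto
  have C: "0 \<le> C"
    using r e by (simp add: C_def)
  have \<psi>_nonneg: "0 \<le> \<psi> x" and \<phi>_nonneg: "0 \<le> \<phi> x" for x
    using s C by (auto simp: \<psi>_def \<phi>_def E_def indicator_def)
  have \<psi>_integrable: "integrable M \<psi>"
    unfolding \<psi>_def[abs_def] using E by (rule integrable_indicator_mult_diff)
  have \<phi>_integrable: "integrable M \<phi>"
    unfolding \<phi>_def[abs_def]
    using integrable_indicator_const[OF W(1,3)] integrable_indicator_const[OF WmE]
    by (auto simp: mult.commute)
  have nn_integral_eq:
      "(\<integral>\<^sup>+x. ennreal (g x) * indicator A x \<partial>M) = ennreal (LINT x|M. g x * indicator A x)"
    if "integrable M g" "\<And>x. 0 \<le> g x" "A \<in> sets M" for g A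
  proof -
    have "integrable M (\<lambda>x. g x * indicator A x)"
      using that by (intro integrable_real_mult_indicator)
    then show ?thesis
      using that by (subst nn_integral_eq_integral[symmetric])
        (auto intro!: nn_integral_cong simp: indicator_def)
  qed
  have per_cube: "(LINT x|M. \<psi> x * indicator (Q i) x) \<le> (LINT x|M. \<phi> x * indicator (Q i) x)" for i
  proof -
    have "\<psi> x * indicator (Q i) x = indicator (Q i \<inter> E) x * (f x - s)"
      and "\<phi> x * indicator (Q i) x
        = C * s * indicator (Q i \<inter> W) x + s * indicator (Q i \<inter> (W - E)) x" for x
      by (auto simp: \<psi>_def \<phi>_def indicator_def)
    moreover have "Q i \<inter> W \<in> sets M" "Q i \<inter> W \<subseteq> Q0" "Q i \<inter> (W - E) \<in> sets M" "Q i \<inter> (W - E) \<subseteq> Q0"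
      using Q(1,2) W WmE by auto
    ultimately show ?thesis
      using integral_excess_on_cube_le[OF W(1,2)[unfolded E_def] Q(1,2,3) osc s r e]
        integrable_indicator_const[of "Q i \<inter> W" 1] integrable_indicator_const[of "Q i \<inter> (W - E)" 1]
      by (simp add: space_M C_def E_def)
  qed
  have "ennreal (LINT x|M. \<psi> x) = (\<integral>\<^sup>+x. ennreal (\<psi> x) \<partial>M)"
    using \<psi>_integrable \<psi>_nonneg by (intro nn_integral_eq_integral[symmetric]) auto
  also have "\<dots> \<le> (\<Sum>i. \<integral>\<^sup>+x. ennreal (\<psi> x) * indicator (Q i) x \<partial>M)"
  proof (rule nn_integral_le_sum_cover[OF Q(1)])
    have [measurable]: "\<psi> \<in> borel_measurable M"
      using \<psi>_integrable by (rule borel_measurable_integrable)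
    show "(\<lambda>x. ennreal (\<psi> x)) \<in> borel_measurable M"
      by measurable
    show "AE x in M. ennreal (\<psi> x) \<noteq> 0 \<longrightarrow> x \<in> (\<Union>i. Q i)"
      using cover by (auto simp: \<psi>_def elim!: AE_mp)
  qed
  also have "\<dots> \<le> (\<Sum>i. \<integral>\<^sup>+x. ennreal (\<phi> x) * indicator (Q i) x \<partial>M)"
    using per_cube Q(1) \<psi>_integrable \<psi>_nonneg \<phi>_integrable \<phi>_nonneg
    by (intro suminf_le summableI) (simp add: nn_integral_eq)
  also have "\<dots> \<le> of_nat B * (\<integral>\<^sup>+x. ennreal (\<phi> x) \<partial>M)"
    using overlap Q(1) \<phi>_integrable by (intro nn_integral_sum_bounded_overlap_le) auto
  also have "\<dots> = ennreal (B * (C * s * measure M W + s * measure M (W - E)))"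
  proof -
    have "(LINT x|M. \<phi> x) = C * s * measure M W + s * measure M (W - E)"
      using integrable_indicator_const[OF W(1,3), of 1] integrable_indicator_const[OF WmE, of 1]
        W(1) WmE(1)
      by (simp add: \<phi>_def space_M)
    moreover have "0 \<le> C * s * measure M W + s * measure M (W - E)"
      using s C by simp
    ultimately show ?thesis
      using \<phi>_integrable \<phi>_nonneg
      by (simp add: nn_integral_eq_integral ennreal_of_nat_eq_real_of_nat ennreal_mult'')
  qed
  finally have "(LINT x|M. \<psi> x) \<le> B * (C * s * measure M W + s * measure M (W - E))"
    using s C by (subst (asm) ennreal_le_iff) auto
  then show ?thesis
    by (simp add: \<psi>_def)
qed

(* W is E together with an open neighbourhood of E inside the interior of Q0; points of E off
   the null boundary of Q0 are interior points of W, hence density points. *)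
lemma exists_density_neighbourhood:
  assumes cube: "is_cube Q0" and E: "E \<in> sets M" "E \<subseteq> Q0" and "0 < \<delta>"
  obtains W where "W \<in> sets M" "E \<subseteq> W" "W \<subseteq> Q0" "measure M W < measure M E + \<delta>"
    "AE x in M. x \<in> E \<longrightarrow> density_point M W x"
proof -
  obtain a b where Q0: "Q0 = cbox a b"
    using cube by (auto simp: is_cube_def)
  obtain U0 where U0: "open U0" "E \<subseteq> U0" "measure M (U0 \<inter> Q0) < measure M (E \<inter> Q0) + \<delta>"
    using exists_open_superset_measure_less[OF sets_M Q0_sets Q0_finite E(1) \<open>0 < \<delta>\<close>] by blast
  define U where "U = U0 \<inter> box a b"
  define W where "W = U \<union> E"
  have U: "open U" "U \<subseteq> W" "U \<subseteq> Q0" "U \<in> sets M"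
    using U0(1) box_subset_cbox[of a b] sets_M by (auto simp: U_def W_def Q0)
  have W: "W \<in> sets M" "E \<subseteq> W" "W \<subseteq> Q0"
    using U E by (auto simp: W_def)
  have "measure M W \<le> measure M (U0 \<inter> Q0)"
    using W U0(1,2) Q0_sets sets_M by (intro measure_subset_mono) (auto simp: W_def U_def)
  with U0(3) E(2) have "measure M W < measure M E + \<delta>"
    by (simp add: Int_absorb2)
  moreover have "AE x in M. x \<in> E \<longrightarrow> density_point M W x"
  proof -
    have "cbox a b - box a b \<in> null_sets M"
      using null_sets_cbox_Diff_box[of a b] admissible
      by (auto simp: admissible_measure_def absolutely_continuous_def)
    then have "AE x in M. x \<notin> cbox a b - box a b"
      by (rule AE_not_in)
    then show ?thesis
      using AE_not_null_cube_centre[OF sets_M]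
    proof eventually_elim
      case (elim x)
      show ?case
      proof
        assume "x \<in> E"
        with elim E(2) U0(2) have "x \<in> U" by (auto simp: U_def Q0)
        then show "density_point M W x"
          using density_point_if_interior[OF sets_M U(1,2) _ _ elim(2)]
            emeasure_subset_finite[OF U(3,4)] by blast
      qed
    qed
  qed
  ultimately show thesis
    using W that by blast
qed

lemma integral_excess_le_approx:
  fixes s eps lam r \<delta> :: real and B :: nat
  defines "E \<equiv> {x\<in>Q0. s < f x}"
  defines "C \<equiv> eps * (lam / (2 * r) + 1) / (lam - eps)"
  assumes cov: "covering_constant B TYPE('n)" and cube: "is_cube Q0" and pos: "0 < emeasure M Q0"
    and GR: "GR M Q0 eps f"
    and eps: "0 < eps" "eps < lam" and r: "0 < r" "lam \<le> 2 * (1 - r)"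
    and s: "0 \<le> s" and \<delta>: "0 < \<delta>" "measure M E + \<delta> \<le> r * measure M Q0"
  shows "(LINT x|M. indicator E x * (f x - s)) \<le> B * (C * s * (measure M E + \<delta>) + s * \<delta>)"
proof -
  have E: "E \<in> sets M" "E \<subseteq> Q0"
    by (auto simp: E_def superlevel_sets)
  have C: "0 \<le> C"
    using r eps by (simp add: C_def)
  obtain W where W: "W \<in> sets M" "E \<subseteq> W" "W \<subseteq> Q0" "measure M W < measure M E + \<delta>"
    and density: "AE x in M. x \<in> E \<longrightarrow> density_point M W x"
    using exists_density_neighbourhood[OF cube E \<delta>(1)] by blast
  have "r < 1" "measure M W \<le> r * measure M Q0"
    using W(4) \<delta>(2) eps r by auto
  then obtain I :: "nat set" and Qs :: "nat \<Rightarrow> (real ^ 'n) set"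
    where Qs: "\<forall>i\<in>I. is_cube (Qs i) \<and> Qs i \<subseteq> Q0 \<and> measure M (Qs i \<inter> W) = r * measure M (Qs i)"
      and overlap: "\<forall>x\<in>Q0. finite {i\<in>I. x \<in> Qs i} \<and> card {i\<in>I. x \<in> Qs i} \<le> B"
      and covers: "{x. density_point M W x} \<subseteq> (\<Union>i\<in>I. Qs i)"
    using cov[unfolded covering_constant_def, rule_format, of M Q0 W r]
      admissible cube pos Q0_finite W r by blast
  define Q where "Q i = (if i \<in> I then Qs i else {})" for i
  have "(LINT x|M. indicator E x * (f x - s)) \<le> B * (C * s * measure M W + s * measure M (W - E))"
    unfolding C_def E_def
  proof (rule integral_excess_le_of_covering[OF W(1) _ W(3)])
    show "Q i \<in> sets M" "Q i \<subseteq> Q0" "measure M (Q i \<inter> W) = r * measure M (Q i)" for i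
      using Qs sets_M by (auto simp: Q_def is_cube_def)
    show "osc M (Q i) f \<le> eps * avg M (Q i) f" if "0 < measure M (Q i)" for i
      using that Qs GR by (auto simp: Q_def GR_def split: if_splits)
    show "finite {i. x \<in> Q i} \<and> card {i. x \<in> Q i} \<le> B" for x
    proof (cases "x \<in> Q0")
      case True
      have "{i. x \<in> Q i} = {i\<in>I. x \<in> Qs i}" by (auto simp: Q_def)
      then show ?thesis using overlap True by simp
    next
      case False
      then have "{i. x \<in> Q i} = {}" using Qs by (auto simp: Q_def)
      then show ?thesis by simp
    qed
    show "AE x in M. x \<in> {x\<in>Q0. s < f x} \<longrightarrow> x \<in> (\<Union>i. Q i)"
      using density by eventually_elim (use covers in \<open>auto simp: E_def Q_def\<close>)
  qed (use W(2) s r eps in \<open>auto simp: E_def\<close>)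
  also have "\<dots> \<le> B * (C * s * (measure M E + \<delta>) + s * \<delta>)"
  proof -
    have "measure M (W - E) = measure M W - measure M E"
      using W E emeasure_subset_finite[OF W(3,1)] by (intro measure_Diff) (auto simp: less_top)
    then show ?thesis
      using W(4) C s by (intro mult_left_mono add_mono mult_left_mono) auto
  qed
  finally show ?thesis .
qed

(* Choosing r strictly between rho and 1 - lam/2 leaves room for the outer approximation of E;
   the approximate bound is then passed to the limit delta -> 0. *)
lemma integral_excess_le:
  fixes s eps lam rho :: real and B :: nat
  defines "E \<equiv> {x\<in>Q0. s < f x}"
  assumes cov: "covering_constant B TYPE('n)" and cube: "is_cube Q0" and pos: "0 < emeasure M Q0"
    and GR: "GR M Q0 eps f"
    and eps: "0 < eps" "eps < lam" and rho: "0 < rho" "rho < 1 - lam / 2"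
    and s: "0 \<le> s" and small: "measure M E \<le> rho * measure M Q0"
  shows "(LINT x|M. indicator E x * (f x - s))
    \<le> B * ((lam / rho + 1) / (lam - eps)) * eps * s * measure M E"
proof -
  define r where "r = (rho + (1 - lam / 2)) / 2"
  define C where "C = eps * (lam / (2 * r) + 1) / (lam - eps)"
  have r: "rho < r" "0 < r" "lam \<le> 2 * (1 - r)"
    using rho eps by (auto simp: r_def field_simps)
  have mQ: "0 < measure M Q0"
    using pos emeasure_subset_eq[OF order.refl Q0_sets] by simp
  have "C \<le> ((lam / rho + 1) / (lam - eps)) * eps"
  proof -
    have "lam / (2 * r) \<le> lam / rho"
      using eps rho r by (intro divide_left_mono) auto
    then show ?thesis
      using eps unfolding C_def by (simp add: divide_right_mono)
  qed
  have "(LINT x|M. indicator E x * (f x - s)) \<le> B * (C * s * (measure M E + 0) + s * 0)"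
  proof (rule tendsto_le[OF trivial_limit_at_right_real])
    show "((\<lambda>\<delta>. B * (C * s * (measure M E + \<delta>) + s * \<delta>)) \<longlongrightarrow> B * (C * s * (measure M E + 0) + s * 0))
        (at_right 0)"
      by (intro tendsto_intros)
    have "(LINT x|M. indicator E x * (f x - s)) \<le> B * (C * s * (measure M E + \<delta>) + s * \<delta>)"
      if "0 < \<delta>" "\<delta> < (r - rho) * measure M Q0" for \<delta>
      unfolding C_def E_def
      by (rule integral_excess_le_approx[OF cov cube pos GR eps r(2,3) s that(1)])
        (use small that(2) in \<open>simp add: E_def algebra_simps\<close>)
    then show "\<forall>\<^sub>F \<delta> in at_right 0.
        (LINT x|M. indicator E x * (f x - s)) \<le> B * (C * s * (measure M E + \<delta>) + s * \<delta>)"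
      using r mQ
      by (auto simp: eventually_at_right_field intro!: exI[of _ "(r - rho) * measure M Q0"])
  qed simp
  also have "\<dots> \<le> B * ((lam / rho + 1) / (lam - eps)) * eps * s * measure M E"
  proof -
    have "B * (C * (s * measure M E))
        \<le> B * (((lam / rho + 1) / (lam - eps)) * eps * (s * measure M E))"
      using \<open>C \<le> _\<close> s by (intro mult_left_mono mult_right_mono) auto
    then show ?thesis by (simp add: mult.assoc)
  qed
  finally show ?thesis .
qed
end

theorem theorem2:
  fixes M :: "(real ^ 'n) measure" and Q0 :: "(real ^ 'n) set"
    and f :: "real ^ 'n \<Rightarrow> real" and B :: nat and eps lam rho t :: real
  assumes "covering_constant B TYPE('n)"
    and "admissible_measure M"
    and "is_cube Q0" and "0 < emeasure M Q0" and "emeasure M Q0 < \<infinity>"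
    and "0 < eps" and "eps < 2"
    and "GR M Q0 eps f"
    and "eps < lam" and "lam < 2"
    and "0 < rho" and "rho < 1 - lam / 2"
    and "0 < t" and "t \<le> rho * measure M Q0"
  shows "rearr2 M Q0 f t \<le> (real B * ((lam / rho + 1) / (lam - eps)) * eps + 1) * rearr M Q0 f t"
proof -
  define K where "K = real B * ((lam / rho + 1) / (lam - eps)) * eps"
  define s where "s = rearr M Q0 f t"
  define E where "E = {x\<in>Q0. s < f x}"
  have Q0_sets: "Q0 \<in> sets M"
    using assms(2,3) unfolding is_cube_def admissible_measure_def
    by (metis borel_closed closed_cbox sets_lborel)
  interpret nonneg_integrable_on_finite_set M Q0 f
    using assms(2,5,8) Q0_sets by unfold_locales (auto simp: GR_def)
  have "rho * measure M Q0 \<le> measure M Q0"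
    using assms(6,9,11,12) by (intro mult_left_le_one_le) auto
  then have t_le: "t \<le> measure M Q0"
    using assms(14) by linarith
  then have s: "0 \<le> s"
    using assms(13) by (simp add: s_def rearr_nonneg)
  have "measure M E \<le> t"
    using measure_superlevel_rearr_le[OF assms(13)] by (simp add: E_def s_def)
  have K: "0 \<le> K"
    using assms(6,9,11) by (simp add: K_def)
  have "(LINT x|M. indicator E x * (f x - s)) \<le> K * s * measure M E"
    unfolding K_def E_def
    by (rule integral_excess_le[OF assms(1,3,4,8,6,9,11,12) s])
      (use \<open>measure M E \<le> t\<close> assms(14) in \<open>unfold E_def, linarith\<close>)
  also have "\<dots> \<le> K * s * t"
    using \<open>measure M E \<le> t\<close> K s by (intro mult_left_mono) auto
  finally have "t * rearr2 M Q0 f t \<le> t * ((K + 1) * s)"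
    using rearr2_le_rearr_plus_excess[OF assms(13) t_le]
    by (simp add: E_def s_def algebra_simps)
  then show ?thesis
    using assms(13) by (simp add: K_def s_def)
qed

end
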